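(* Let $H$ be a Hopf algebra over a field, $A$ a unital associative algebra and $\cdot:H\otimes A\to A$ a partial action of $H$ on $A$. For each group-like element $h\in G(H)$ and each $a\in A$: (i) $(h\cdot1_A)a(h\cdot1_A)=(h\cdot1_A)a$; (ii) if the restriction of $\cdot$ to $\Bbbk G(H)\otimes A$ is a symmetric partial action, then $(h\cdot1_A)a=a(h\cdot1_A)$; (iii) if $h\cdot1_A=0$, then $(h^i\cdot1_A)(h^{i+1}\cdot1_A)=0$ for all $i\in\mathbb{Z}$.
   Context: $G(H)=\{g\ne0:\Delta(g)=g\otimes g\}$ is the group of group-like elements and $\Bbbk G(H)$ its span. A partial action of $H$ on $A$ is a linear map $\cdot:H\otimes A\to A$, $h\otimes a\mapsto h\cdot a$, with $1_H\cdot a=a$, $h\cdot(ab)=(h_1\cdot a)(h_2\cdot b)$, $h\cdot(k\cdot a)=(h_1\cdot1_A)(h_2k\cdot a)$ for all $h,k\in H$, $a,b\in A$ (Sweedler notation $\Delta(h)=h_1\otimes h_2$); it is symmetric if moreover $h\cdot(k\cdot a)=(h_1k\cdot a)(h_2\cdot1_A)$. *)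

theory Defs
  imports Main "HOL.Vector_Spaces"
begin

text \<open>
A k-algebra (unital, associative) is a type
of sort {ring, monoid_mult} (no requirement 0 \<noteq> 1) with a k-vector space structure
such that multiplication is k-bilinear.

Tensors in H \<otimes> H (resp. H \<otimes> H \<otimes> H) are represented by finite lists of pairs (triples)
of elements (the list [(x1,y1),...] stands for the sum of the xi \<otimes> yi).  Two such lists
represent the same tensor iff every k-bilinear (trilinear) form takes the same value on
them; over a field bilinear forms separate the points of H \<otimes> H, so this is exactly equality
in the tensor product.  The comultiplication \<Delta> maps h to a representative of \<Delta>(h), and
Sweedler sums h1 \<otimes> h2 are sums over that list.
\<close>

definition algebra_over :: "('k::field \<Rightarrow> 'h::{ring,monoid_mult} \<Rightarrow> 'h) \<Rightarrow> bool" where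
  "algebra_over sm \<longleftrightarrow> vector_space sm \<and>
     (\<forall>c x y. sm c (x * y) = sm c x * y) \<and> (\<forall>c x y. sm c (x * y) = x * sm c y)"

definition bilinear_form :: "('k::field \<Rightarrow> 'h::ab_group_add \<Rightarrow> 'h) \<Rightarrow> ('h \<Rightarrow> 'h \<Rightarrow> 'k) \<Rightarrow> bool" where
  "bilinear_form sm f \<longleftrightarrow>
     (\<forall>x x' y. f (x + x') y = f x y + f x' y) \<and> (\<forall>x y y'. f x (y + y') = f x y + f x y') \<and>
     (\<forall>c x y. f (sm c x) y = c * f x y) \<and> (\<forall>c x y. f x (sm c y) = c * f x y)"

definition trilinear_form :: "('k::field \<Rightarrow> 'h::ab_group_add \<Rightarrow> 'h) \<Rightarrow> ('h \<Rightarrow> 'h \<Rightarrow> 'h \<Rightarrow> 'k) \<Rightarrow> bool" where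
  "trilinear_form sm f \<longleftrightarrow>
     (\<forall>x x' y z. f (x + x') y z = f x y z + f x' y z) \<and>
     (\<forall>x y y' z. f x (y + y') z = f x y z + f x y' z) \<and>
     (\<forall>x y z z'. f x y (z + z') = f x y z + f x y z') \<and>
     (\<forall>c x y z. f (sm c x) y z = c * f x y z) \<and>
     (\<forall>c x y z. f x (sm c y) z = c * f x y z) \<and>
     (\<forall>c x y z. f x y (sm c z) = c * f x y z)"

definition tens2_eq :: "('k::field \<Rightarrow> 'h::ab_group_add \<Rightarrow> 'h) \<Rightarrow> ('h \<times> 'h) list \<Rightarrow> ('h \<times> 'h) list \<Rightarrow> bool" where
  "tens2_eq sm L M \<longleftrightarrow> (\<forall>f. bilinear_form sm f \<longrightarrow>
      (\<Sum>(x, y)\<leftarrow>L. f x y) = (\<Sum>(x, y)\<leftarrow>M. f x y))"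

definition tens3_eq :: "('k::field \<Rightarrow> 'h::ab_group_add \<Rightarrow> 'h) \<Rightarrow> ('h \<times> 'h \<times> 'h) list \<Rightarrow> ('h \<times> 'h \<times> 'h) list \<Rightarrow> bool" where
  "tens3_eq sm L M \<longleftrightarrow> (\<forall>f. trilinear_form sm f \<longrightarrow>
      (\<Sum>(x, y, z)\<leftarrow>L. f x y z) = (\<Sum>(x, y, z)\<leftarrow>M. f x y z))"

definition hopf_algebra ::
  "('k::field \<Rightarrow> 'h::{ring,monoid_mult} \<Rightarrow> 'h) \<Rightarrow> ('h \<Rightarrow> ('h \<times> 'h) list) \<Rightarrow> ('h \<Rightarrow> 'k) \<Rightarrow> ('h \<Rightarrow> 'h) \<Rightarrow> bool" where
  "hopf_algebra sm \<Delta> \<epsilon> S \<longleftrightarrow>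
     algebra_over sm \<and>
     \<comment> \<open>\<Delta> is k-linear\<close>
     (\<forall>h k. tens2_eq sm (\<Delta> (h + k)) (\<Delta> h @ \<Delta> k)) \<and>
     (\<forall>c h. tens2_eq sm (\<Delta> (sm c h)) (map (\<lambda>(x, y). (sm c x, y)) (\<Delta> h))) \<and>
     \<comment> \<open>\<epsilon> is k-linear\<close>
     (\<forall>h k. \<epsilon> (h + k) = \<epsilon> h + \<epsilon> k) \<and> (\<forall>c h. \<epsilon> (sm c h) = c * \<epsilon> h) \<and>
     \<comment> \<open>coassociativity\<close>
     (\<forall>h. tens3_eq sm (concat (map (\<lambda>(x, y). map (\<lambda>(u, v). (u, v, y)) (\<Delta> x)) (\<Delta> h)))
                      (concat (map (\<lambda>(x, y). map (\<lambda>(u, v). (x, u, v)) (\<Delta> y)) (\<Delta> h)))) \<and>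
     \<comment> \<open>counit\<close>
     (\<forall>h. (\<Sum>(x, y)\<leftarrow>\<Delta> h. sm (\<epsilon> x) y) = h) \<and>
     (\<forall>h. (\<Sum>(x, y)\<leftarrow>\<Delta> h. sm (\<epsilon> y) x) = h) \<and>
     \<comment> \<open>\<Delta> and \<epsilon> are algebra maps\<close>
     (\<forall>h k. tens2_eq sm (\<Delta> (h * k))
        (concat (map (\<lambda>(x, y). map (\<lambda>(u, v). (x * u, y * v)) (\<Delta> k)) (\<Delta> h)))) \<and>
     tens2_eq sm (\<Delta> 1) [(1, 1)] \<and>
     (\<forall>h k. \<epsilon> (h * k) = \<epsilon> h * \<epsilon> k) \<and> \<epsilon> 1 = 1 \<and>
     \<comment> \<open>antipode\<close>
     (\<forall>h k. S (h + k) = S h + S k) \<and> (\<forall>c h. S (sm c h) = sm c (S h)) \<and>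
     (\<forall>h. (\<Sum>(x, y)\<leftarrow>\<Delta> h. S x * y) = sm (\<epsilon> h) 1) \<and>
     (\<forall>h. (\<Sum>(x, y)\<leftarrow>\<Delta> h. x * S y) = sm (\<epsilon> h) 1)"

definition grouplikes :: "('k::field \<Rightarrow> 'h::{ring,monoid_mult} \<Rightarrow> 'h) \<Rightarrow> ('h \<Rightarrow> ('h \<times> 'h) list) \<Rightarrow> 'h set" where
  "grouplikes sm \<Delta> = {g. g \<noteq> 0 \<and> tens2_eq sm (\<Delta> g) [(g, g)]}"

text \<open>Linear map H \<otimes> A \<rightarrow> A, i.e. a k-bilinear map H \<times> A \<rightarrow> A.\<close>
definition bilinear_action ::
  "('k::field \<Rightarrow> 'h::ab_group_add \<Rightarrow> 'h) \<Rightarrow> ('k \<Rightarrow> 'a::ab_group_add \<Rightarrow> 'a) \<Rightarrow> ('h \<Rightarrow> 'a \<Rightarrow> 'a) \<Rightarrow> bool" where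
  "bilinear_action smH smA act \<longleftrightarrow>
     (\<forall>h h' a. act (h + h') a = act h a + act h' a) \<and>
     (\<forall>h a a'. act h (a + a') = act h a + act h a') \<and>
     (\<forall>c h a. act (smH c h) a = smA c (act h a)) \<and>
     (\<forall>c h a. act h (smA c a) = smA c (act h a))"

definition partial_action ::
  "('k::field \<Rightarrow> 'h::{ring,monoid_mult} \<Rightarrow> 'h) \<Rightarrow> ('h \<Rightarrow> ('h \<times> 'h) list) \<Rightarrow>
   ('k \<Rightarrow> 'a::{ring,monoid_mult} \<Rightarrow> 'a) \<Rightarrow> ('h \<Rightarrow> 'a \<Rightarrow> 'a) \<Rightarrow> bool" where
  "partial_action smH \<Delta> smA act \<longleftrightarrow>
     bilinear_action smH smA act \<and>
     (\<forall>a. act 1 a = a) \<and>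
     (\<forall>h a b. act h (a * b) = (\<Sum>(x, y)\<leftarrow>\<Delta> h. act x a * act y b)) \<and>
     (\<forall>h k a. act h (act k a) = (\<Sum>(x, y)\<leftarrow>\<Delta> h. act x 1 * act (y * k) a))"

text \<open>The restriction of act to kG(H) \<otimes> A is a symmetric partial action (of the Hopf
  subalgebra kG(H)): all partial action axioms plus symmetry, for h, k in the span of G(H).\<close>
definition symmetric_on_span_grouplikes ::
  "('k::field \<Rightarrow> 'h::{ring,monoid_mult} \<Rightarrow> 'h) \<Rightarrow> ('h \<Rightarrow> ('h \<times> 'h) list) \<Rightarrow>
   ('k \<Rightarrow> 'a::{ring,monoid_mult} \<Rightarrow> 'a) \<Rightarrow> ('h \<Rightarrow> 'a \<Rightarrow> 'a) \<Rightarrow> bool" where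
  "symmetric_on_span_grouplikes smH \<Delta> smA act \<longleftrightarrow>
     (let kG = module.span smH (grouplikes smH \<Delta>) in
       bilinear_action smH smA act \<and>
       (\<forall>a. act 1 a = a) \<and>
       (\<forall>h\<in>kG. \<forall>a b. act h (a * b) = (\<Sum>(x, y)\<leftarrow>\<Delta> h. act x a * act y b)) \<and>
       (\<forall>h\<in>kG. \<forall>k\<in>kG. \<forall>a. act h (act k a) = (\<Sum>(x, y)\<leftarrow>\<Delta> h. act x 1 * act (y * k) a)) \<and>
       (\<forall>h\<in>kG. \<forall>k\<in>kG. \<forall>a. act h (act k a) = (\<Sum>(x, y)\<leftarrow>\<Delta> h. act (x * k) a * act y 1)))"

definition int_pow :: "'h::monoid_mult \<Rightarrow> int \<Rightarrow> 'h" where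
  "int_pow h i = (if 0 \<le> i then h ^ nat i else (THE g. h * g = 1 \<and> g * h = 1) ^ nat (- i))"

end

theory Submission
  imports Defs
begin

text \<open>
  For a group-like g the coproduct is g \<otimes> g, so every Sweedler sum over \<Delta> g of a bilinear
  expression collapses to its value at (g, g); since tensors are compared through bilinear
  forms, this is obtained for algebra-valued expressions by composing with linear functionals,
  which separate the points of a vector space.  Hence g acts multiplicatively and
  g \<cdot> (k \<cdot> a) = (g \<cdot> 1)(gk \<cdot> a).  A group-like h is invertible with inverse S h, again group-like, so
  (h \<cdot> 1) a = h \<cdot> (S h \<cdot> a).  Then (i) is multiplicativity of h applied to (S h \<cdot> a) 1,
  (ii) is the symmetric axiom, which rewrites h \<cdot> (S h \<cdot> a) as a (h \<cdot> 1), and (iii) is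
  h^i \<cdot> (h \<cdot> 1) = (h^i \<cdot> 1)(h^(i+1) \<cdot> 1), whose left side vanishes when h \<cdot> 1 = 0.
\<close>

lemma (in vector_space) eq_if_linear_functionals_eq:
  fixes u v :: 'b
  assumes "\<And>\<phi>. Vector_Spaces.linear scale (*) \<phi> \<Longrightarrow> \<phi> u = \<phi> v"
  shows "u = v"
proof (rule ccontr)
  assume "u \<noteq> v"
  then have "independent {u - v}" by simp
  then obtain B where B: "independent B" "span B = UNIV" "u - v \<in> B"
    using independent_extend_basis span_extend_basis extend_basis_superset by blast
  define \<phi> where "\<phi> w = representation B w (u - v)" for w
  have lin: "Vector_Spaces.linear scale (*) \<phi>"
    unfolding \<phi>_def using B(1,2) by (rule linear_representation)
  have "\<phi> (u - v) = 1"
    unfolding \<phi>_def using B(1,3) by (simp add: representation_basis)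
  moreover have "\<phi> (u - v) = \<phi> u - \<phi> v"
    by (rule module_hom.diff[OF module_hom_linearI[OF lin]])
  ultimately show False using assms[OF lin] by simp
qed

lemma (in module_hom) sum_list_map: "f (sum_list (map g xs)) = (\<Sum>x\<leftarrow>xs. f (g x))"
  by (induction xs) (simp_all add: add)

lemma vector_space_field_mult: "vector_space ((*) :: 'k::field \<Rightarrow> 'k \<Rightarrow> 'k)"
  by unfold_locales (simp_all add: algebra_simps)

lemma algebra_over_vector_space: "algebra_over sm \<Longrightarrow> vector_space sm"
  unfolding algebra_over_def by simp

lemma hopf_algebra_algebra_over: "hopf_algebra smH \<Delta> \<epsilon> S \<Longrightarrow> algebra_over smH"
  unfolding hopf_algebra_def by simp

lemma hopf_algebra_comult_one: "hopf_algebra smH \<Delta> \<epsilon> S \<Longrightarrow> tens2_eq smH (\<Delta> 1) [(1, 1)]"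
  unfolding hopf_algebra_def by blast

lemma hopf_algebra_comult_mult:
  "hopf_algebra smH \<Delta> \<epsilon> S \<Longrightarrow> tens2_eq smH (\<Delta> (g * k))
     (concat (map (\<lambda>(x, y). map (\<lambda>(u, v). (x * u, y * v)) (\<Delta> k)) (\<Delta> g)))"
  unfolding hopf_algebra_def by blast

lemma hopf_algebra_counit:
  "hopf_algebra smH \<Delta> \<epsilon> S \<Longrightarrow> (\<Sum>(x, y)\<leftarrow>\<Delta> h. smH (\<epsilon> x) y) = h"
  unfolding hopf_algebra_def by blast

lemma hopf_algebra_antipode:
  assumes "hopf_algebra smH \<Delta> \<epsilon> S"
  shows "(\<Sum>(x, y)\<leftarrow>\<Delta> h. S x * y) = smH (\<epsilon> h) 1"
    and "(\<Sum>(x, y)\<leftarrow>\<Delta> h. x * S y) = smH (\<epsilon> h) 1"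
  using assms unfolding hopf_algebra_def by blast+

lemma hopf_algebra_linear_counit:
  assumes "hopf_algebra smH \<Delta> \<epsilon> S"
  shows "Vector_Spaces.linear smH (*) \<epsilon>"
  using assms vector_space_field_mult algebra_over_vector_space[OF hopf_algebra_algebra_over[OF assms]]
  unfolding hopf_algebra_def linear_iff by blast

lemma hopf_algebra_linear_antipode:
  assumes "hopf_algebra smH \<Delta> \<epsilon> S"
  shows "Vector_Spaces.linear smH smH S"
  using assms algebra_over_vector_space[OF hopf_algebra_algebra_over[OF assms]]
  unfolding hopf_algebra_def linear_iff by blast

definition bilinear_map ::
  "('k::field \<Rightarrow> 'h::ab_group_add \<Rightarrow> 'h) \<Rightarrow> ('k \<Rightarrow> 'b::ab_group_add \<Rightarrow> 'b) \<Rightarrow>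
   ('h \<Rightarrow> 'h \<Rightarrow> 'b) \<Rightarrow> bool" where
  "bilinear_map smH smB F \<longleftrightarrow>
     (\<forall>y. Vector_Spaces.linear smH smB (\<lambda>x. F x y)) \<and> (\<forall>x. Vector_Spaces.linear smH smB (F x))"

lemma tens2_eq_sum_bilinear_map:
  fixes smH :: "'k::field \<Rightarrow> 'h::ab_group_add \<Rightarrow> 'h" and smB :: "'k \<Rightarrow> 'b::ab_group_add \<Rightarrow> 'b"
  assumes L: "tens2_eq smH L M" and F: "bilinear_map smH smB F"
  shows "(\<Sum>(x, y)\<leftarrow>L. F x y) = (\<Sum>(x, y)\<leftarrow>M. F x y)"
proof -
  have "vector_space smB"
    using F unfolding bilinear_map_def linear_iff by blast
  then interpret B: vector_space smB .
  show ?thesis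
  proof (rule B.eq_if_linear_functionals_eq)
    fix \<phi> :: "'b \<Rightarrow> 'k"
    assume \<phi>: "Vector_Spaces.linear smB (*) \<phi>"
    have "bilinear_form smH (\<lambda>x y. \<phi> (F x y))"
      using F \<phi> unfolding bilinear_form_def bilinear_map_def linear_iff by simp
    then have "(\<Sum>(x, y)\<leftarrow>L. \<phi> (F x y)) = (\<Sum>(x, y)\<leftarrow>M. \<phi> (F x y))"
      using L unfolding tens2_eq_def by blast
    then show "\<phi> (\<Sum>(x, y)\<leftarrow>L. F x y) = \<phi> (\<Sum>(x, y)\<leftarrow>M. F x y)"
      by (simp add: module_hom.sum_list_map[OF module_hom_linearI[OF \<phi>]] case_prod_unfold)
  qed
qed

lemma bilinear_map_mult:
  assumes A: "algebra_over smA"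
    and P: "Vector_Spaces.linear smH smA P" and Q: "Vector_Spaces.linear smH smA Q"
  shows "bilinear_map smH smA (\<lambda>x y. P x * Q y)"
proof -
  have "smA c (a * b) = smA c a * b" "smA c (a * b) = a * smA c b" for c a b
    using A unfolding algebra_over_def by auto
  then show ?thesis
    using P Q unfolding bilinear_map_def linear_iff by (simp add: distrib_left distrib_right)
qed

lemma bilinear_form_mult:
  assumes A: "algebra_over smH" and f: "bilinear_form smH f"
  shows "bilinear_form smH (\<lambda>u v. f (a * u * b) (c * v * d))"
proof -
  have "a * smH k u * b = smH k (a * u * b)" for k u a b
    using A unfolding algebra_over_def by metis
  then show ?thesis
    using f unfolding bilinear_form_def by (simp add: distrib_left distrib_right)
qed

lemma linear_mult_right:
  assumes "algebra_over smH"
  shows "Vector_Spaces.linear smH smH (\<lambda>x. x * k)"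
  using assms unfolding algebra_over_def linear_iff by (simp add: distrib_right)

lemma sum_list_concat: "sum_list (concat xss) = (\<Sum>xs\<leftarrow>xss. sum_list xs)"
  by (induction xss) simp_all

lemma sum_comult_mult_grouplike:
  fixes smH :: "'k::field \<Rightarrow> 'h::{ring,monoid_mult} \<Rightarrow> 'h"
  assumes H: "hopf_algebra smH \<Delta> \<epsilon> S" and k: "tens2_eq smH (\<Delta> k) [(k, k)]"
    and f: "bilinear_form smH f"
  shows "(\<Sum>(x, y)\<leftarrow>\<Delta> (g * k). f x y) = (\<Sum>(x, y)\<leftarrow>\<Delta> g. f (x * k) (y * k))"
proof -
  have AH: "algebra_over smH"
    using H by (rule hopf_algebra_algebra_over)
  have "(\<Sum>(x, y)\<leftarrow>\<Delta> (g * k). f x y)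
      = (\<Sum>(x, y)\<leftarrow>\<Delta> g. \<Sum>(u, v)\<leftarrow>\<Delta> k. f (x * u) (y * v))"
    using hopf_algebra_comult_mult[OF H] f unfolding tens2_eq_def
    by (simp add: sum_list_concat map_concat comp_def case_prod_unfold)
  also have "\<dots> = (\<Sum>(x, y)\<leftarrow>\<Delta> g. f (x * k) (y * k))"
  proof -
    have "(\<Sum>(u, v)\<leftarrow>\<Delta> k. f (x * u * 1) (y * v * 1))
        = (\<Sum>(u, v)\<leftarrow>[(k, k)]. f (x * u * 1) (y * v * 1))" for x y
      using k bilinear_form_mult[OF AH f] unfolding tens2_eq_def by blast
    then show ?thesis by simp
  qed
  finally show ?thesis .
qed

lemma grouplike_mult:
  fixes smH :: "'k::field \<Rightarrow> 'h::{ring,monoid_mult} \<Rightarrow> 'h"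
  assumes H: "hopf_algebra smH \<Delta> \<epsilon> S"
    and g: "tens2_eq smH (\<Delta> g) [(g, g)]" and k: "tens2_eq smH (\<Delta> k) [(k, k)]"
  shows "tens2_eq smH (\<Delta> (g * k)) [(g * k, g * k)]"
  unfolding tens2_eq_def
proof (intro allI impI)
  fix f
  assume f: "bilinear_form smH f"
  have "algebra_over smH"
    using H by (rule hopf_algebra_algebra_over)
  then have "(\<Sum>(x, y)\<leftarrow>\<Delta> g. f (1 * x * k) (1 * y * k))
      = (\<Sum>(x, y)\<leftarrow>[(g, g)]. f (1 * x * k) (1 * y * k))"
    using g bilinear_form_mult[OF _ f] unfolding tens2_eq_def by blast
  then show "(\<Sum>(x, y)\<leftarrow>\<Delta> (g * k). f x y) = (\<Sum>(x, y)\<leftarrow>[(g * k, g * k)]. f x y)"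
    using sum_comult_mult_grouplike[OF H k f] by simp
qed

lemma grouplike_power:
  fixes smH :: "'k::field \<Rightarrow> 'h::{ring,monoid_mult} \<Rightarrow> 'h"
  assumes H: "hopf_algebra smH \<Delta> \<epsilon> S" and g: "tens2_eq smH (\<Delta> g) [(g, g)]"
  shows "tens2_eq smH (\<Delta> (g ^ n)) [(g ^ n, g ^ n)]"
proof (induction n)
  case 0
  then show ?case
    using hopf_algebra_comult_one[OF H] by simp
next
  case (Suc n)
  then show ?case
    using grouplike_mult[OF H Suc g] by (simp only: power_Suc2)
qed

lemma grouplike_inverse:
  fixes smH :: "'k::field \<Rightarrow> 'h::{ring,monoid_mult} \<Rightarrow> 'h"
  assumes H: "hopf_algebra smH \<Delta> \<epsilon> S" and h: "tens2_eq smH (\<Delta> h) [(h, h)]"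
    and sh: "s * h = 1" and hs: "h * s = 1"
  shows "tens2_eq smH (\<Delta> s) [(s, s)]"
  unfolding tens2_eq_def
proof (intro allI impI)
  fix f
  assume f: "bilinear_form smH f"
  have "algebra_over smH"
    using H by (rule hopf_algebra_algebra_over)
  then have fs: "bilinear_form smH (\<lambda>u v. f (1 * u * s) (1 * v * s))"
    using f by (rule bilinear_form_mult)
  have "(\<Sum>(x, y)\<leftarrow>\<Delta> s. f x y) = (\<Sum>(x, y)\<leftarrow>\<Delta> (s * h). f (1 * x * s) (1 * y * s))"
    using sum_comult_mult_grouplike[OF H h fs, of s] by (simp add: mult.assoc hs)
  also have "\<dots> = (\<Sum>(x, y)\<leftarrow>[(1, 1)]. f (1 * x * s) (1 * y * s))"
    using hopf_algebra_comult_one[OF H] fs unfolding sh tens2_eq_def by blast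
  finally show "(\<Sum>(x, y)\<leftarrow>\<Delta> s. f x y) = (\<Sum>(x, y)\<leftarrow>[(s, s)]. f x y)"
    by simp
qed

lemma grouplike_counit:
  fixes smH :: "'k::field \<Rightarrow> 'h::{ring,monoid_mult} \<Rightarrow> 'h"
  assumes H: "hopf_algebra smH \<Delta> \<epsilon> S" and h: "h \<in> grouplikes smH \<Delta>"
  shows "\<epsilon> h = 1"
proof -
  interpret H: vector_space smH
    using H hopf_algebra_algebra_over algebra_over_vector_space by blast
  have Delta_h: "tens2_eq smH (\<Delta> h) [(h, h)]"
    using h unfolding grouplikes_def by simp
  have counit_scale: "bilinear_map smH smH (\<lambda>x y. smH (\<epsilon> x) y)"
    using hopf_algebra_linear_counit[OF H] H.vector_space_axioms
    unfolding bilinear_map_def linear_iff by (simp add: H.scale_left_distrib H.scale_right_distrib)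
  have "smH (\<epsilon> h) h = (\<Sum>(x, y)\<leftarrow>\<Delta> h. smH (\<epsilon> x) y)"
    using tens2_eq_sum_bilinear_map[OF Delta_h counit_scale] by simp
  also have "\<dots> = smH 1 h"
    using hopf_algebra_counit[OF H] by simp
  finally show ?thesis
    using h H.scale_cancel_right unfolding grouplikes_def by blast
qed

lemma grouplike_antipode_inverse:
  fixes smH :: "'k::field \<Rightarrow> 'h::{ring,monoid_mult} \<Rightarrow> 'h"
  assumes H: "hopf_algebra smH \<Delta> \<epsilon> S" and h: "h \<in> grouplikes smH \<Delta>"
  shows "S h * h = 1" and "h * S h = 1"
proof -
  have A: "algebra_over smH"
    using H by (rule hopf_algebra_algebra_over)
  then interpret H: vector_space smH
    by (rule algebra_over_vector_space)
  have Delta_h: "tens2_eq smH (\<Delta> h) [(h, h)]"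
    using h unfolding grouplikes_def by simp
  note S = hopf_algebra_linear_antipode[OF H]
  have "S h * h = (\<Sum>(x, y)\<leftarrow>\<Delta> h. S x * y)"
    using tens2_eq_sum_bilinear_map[OF Delta_h bilinear_map_mult[OF A S H.linear_ident]] by simp
  also have "\<dots> = 1"
    using hopf_algebra_antipode(1)[OF H] grouplike_counit[OF H h] by simp
  finally show "S h * h = 1" .
  have "h * S h = (\<Sum>(x, y)\<leftarrow>\<Delta> h. x * S y)"
    using tens2_eq_sum_bilinear_map[OF Delta_h bilinear_map_mult[OF A H.linear_ident S]] by simp
  also have "\<dots> = 1"
    using hopf_algebra_antipode(2)[OF H] grouplike_counit[OF H h] by simp
  finally show "h * S h = 1" .
qed

lemma grouplike_antipode:
  fixes smH :: "'k::field \<Rightarrow> 'h::{ring,monoid_mult} \<Rightarrow> 'h"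
  assumes H: "hopf_algebra smH \<Delta> \<epsilon> S" and h: "h \<in> grouplikes smH \<Delta>"
  shows "S h \<in> grouplikes smH \<Delta>"
proof -
  have "h = h * S h * h"
    using grouplike_antipode_inverse(2)[OF H h] by simp
  moreover have "h \<noteq> 0"
    using h unfolding grouplikes_def by simp
  ultimately have "S h \<noteq> 0"
    by (metis mult_zero_left mult_zero_right)
  then show ?thesis
    using h grouplike_inverse[OF H _ grouplike_antipode_inverse[OF H h]]
    unfolding grouplikes_def by simp
qed

lemma int_pow_inverse:
  fixes h :: "'h::monoid_mult"
  assumes hs: "h * s = 1" and sh: "s * h = 1"
  shows "int_pow h i = (if 0 \<le> i then h ^ nat i else s ^ nat (- i))"
proof -
  have "(THE g. h * g = 1 \<and> g * h = 1) = s"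
  proof (rule the_equality)
    fix g
    assume "h * g = 1 \<and> g * h = 1"
    then show "g = s"
      using sh by (metis mult.assoc mult_1_left mult_1_right)
  qed (use hs sh in simp)
  then show ?thesis
    unfolding int_pow_def by simp
qed

lemma int_pow_add_one:
  fixes h :: "'h::monoid_mult"
  assumes hs: "h * s = 1" and sh: "s * h = 1"
  shows "int_pow h (i + 1) = int_pow h i * h"
proof (cases "0 \<le> i")
  case True
  then have "nat (i + 1) = Suc (nat i)"
    by simp
  then show ?thesis
    using True by (simp add: int_pow_inverse[OF hs sh] power_commutes)
next
  case False
  then obtain m where m: "nat (- i) = Suc m"
    using not0_implies_Suc by fastforce
  then have "nat (- (i + 1)) = m"
    by simp
  moreover have "s ^ Suc m * h = s ^ m * (s * h)"
    by (simp only: power_Suc2 mult.assoc)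
  ultimately show ?thesis
    using False m sh by (auto simp add: int_pow_inverse[OF hs sh])
qed

lemma grouplike_int_pow:
  fixes smH :: "'k::field \<Rightarrow> 'h::{ring,monoid_mult} \<Rightarrow> 'h"
  assumes H: "hopf_algebra smH \<Delta> \<epsilon> S" and h: "h \<in> grouplikes smH \<Delta>"
  shows "tens2_eq smH (\<Delta> (int_pow h i)) [(int_pow h i, int_pow h i)]"
  using grouplike_power[OF H] h grouplike_antipode[OF H h]
  unfolding int_pow_inverse[OF grouplike_antipode_inverse(2,1)[OF H h]] grouplikes_def by simp

lemma bilinear_action_linear:
  assumes "bilinear_action smH smA act" and "vector_space smH" and "vector_space smA"
  shows "Vector_Spaces.linear smH smA (\<lambda>x. act x b)"
  using assms unfolding bilinear_action_def linear_iff by simp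

lemma bilinear_action_mult_right_linear:
  assumes ba: "bilinear_action smH smA act" and AH: "algebra_over smH" and VA: "vector_space smA"
  shows "Vector_Spaces.linear smH smA (\<lambda>x. act (x * k) b)"
proof -
  have "Vector_Spaces.linear smH smA ((\<lambda>x. act x b) \<circ> (\<lambda>x. x * k))"
    using Vector_Spaces.linear_compose linear_mult_right[OF AH]
      bilinear_action_linear[OF ba algebra_over_vector_space[OF AH] VA] by blast
  then show ?thesis
    by (simp add: comp_def)
qed

lemma partial_action_grouplike_mult:
  fixes smH :: "'k::field \<Rightarrow> 'h::{ring,monoid_mult} \<Rightarrow> 'h"
  assumes H: "hopf_algebra smH \<Delta> \<epsilon> S" and A: "algebra_over smA"
    and act: "partial_action smH \<Delta> smA act" and g: "tens2_eq smH (\<Delta> g) [(g, g)]"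
  shows "act g (b * c) = act g b * act g c"
proof -
  have "bilinear_action smH smA act"
    using act unfolding partial_action_def by simp
  then have "Vector_Spaces.linear smH smA (\<lambda>x. act x d)" for d
    using bilinear_action_linear algebra_over_vector_space[OF hopf_algebra_algebra_over[OF H]]
      algebra_over_vector_space[OF A] by blast
  then have "(\<Sum>(x, y)\<leftarrow>\<Delta> g. act x b * act y c) = act g b * act g c"
    using tens2_eq_sum_bilinear_map[OF g bilinear_map_mult[OF A]] by simp
  then show ?thesis
    using act unfolding partial_action_def by simp
qed

lemma partial_action_grouplike_compose:
  fixes smH :: "'k::field \<Rightarrow> 'h::{ring,monoid_mult} \<Rightarrow> 'h"
  assumes H: "hopf_algebra smH \<Delta> \<epsilon> S" and A: "algebra_over smA"
    and act: "partial_action smH \<Delta> smA act" and g: "tens2_eq smH (\<Delta> g) [(g, g)]"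
  shows "act g (act k b) = act g 1 * act (g * k) b"
proof -
  have AH: "algebra_over smH" and VA: "vector_space smA" and ba: "bilinear_action smH smA act"
    using H A act hopf_algebra_algebra_over algebra_over_vector_space
    unfolding partial_action_def by simp_all
  have "vector_space smH"
    using AH by (rule algebra_over_vector_space)
  then have "bilinear_map smH smA (\<lambda>x y. act x 1 * act (y * k) b)"
    using bilinear_map_mult[OF A bilinear_action_linear[OF ba _ VA]
        bilinear_action_mult_right_linear[OF ba AH VA]] by simp
  then have "(\<Sum>(x, y)\<leftarrow>\<Delta> g. act x 1 * act (y * k) b) = act g 1 * act (g * k) b"
    using tens2_eq_sum_bilinear_map[OF g] by simp
  then show ?thesis
    using act unfolding partial_action_def by simp
qed

lemma symmetric_partial_action_grouplike_compose:
  fixes smH :: "'k::field \<Rightarrow> 'h::{ring,monoid_mult} \<Rightarrow> 'h"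
  assumes H: "hopf_algebra smH \<Delta> \<epsilon> S" and A: "algebra_over smA"
    and sym: "symmetric_on_span_grouplikes smH \<Delta> smA act"
    and g: "g \<in> grouplikes smH \<Delta>" and k: "k \<in> grouplikes smH \<Delta>"
  shows "act g (act k b) = act (g * k) b * act g 1"
proof -
  have AH: "algebra_over smH" and VA: "vector_space smA" and ba: "bilinear_action smH smA act"
    using H A sym hopf_algebra_algebra_over algebra_over_vector_space
    unfolding symmetric_on_span_grouplikes_def Let_def by simp_all
  interpret H: vector_space smH
    using AH by (rule algebra_over_vector_space)
  have "g \<in> H.span (grouplikes smH \<Delta>)" and "k \<in> H.span (grouplikes smH \<Delta>)"
    using g k by (simp_all add: H.span_base)
  then have "act g (act k b) = (\<Sum>(x, y)\<leftarrow>\<Delta> g. act (x * k) b * act y 1)"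
    using sym unfolding symmetric_on_span_grouplikes_def Let_def by blast
  also have "\<dots> = act (g * k) b * act g 1"
  proof -
    have "bilinear_map smH smA (\<lambda>x y. act (x * k) b * act y 1)"
      using bilinear_map_mult[OF A bilinear_action_mult_right_linear[OF ba AH VA]
          bilinear_action_linear[OF ba H.vector_space_axioms VA]] by simp
    moreover have "tens2_eq smH (\<Delta> g) [(g, g)]"
      using g unfolding grouplikes_def by simp
    ultimately show ?thesis
      by (simp add: tens2_eq_sum_bilinear_map)
  qed
  finally show ?thesis .
qed

theorem lemma3p1:
  fixes smH :: "'k::field \<Rightarrow> 'h::{ring,monoid_mult} \<Rightarrow> 'h"
    and \<Delta> :: "'h \<Rightarrow> ('h \<times> 'h) list" and \<epsilon> :: "'h \<Rightarrow> 'k" and S :: "'h \<Rightarrow> 'h"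
    and smA :: "'k \<Rightarrow> 'a::{ring,monoid_mult} \<Rightarrow> 'a"
    and act :: "'h \<Rightarrow> 'a \<Rightarrow> 'a"
  assumes H: "hopf_algebra smH \<Delta> \<epsilon> S"
    and A: "algebra_over smA"
    and pa: "partial_action smH \<Delta> smA act"
    and h: "h \<in> grouplikes smH \<Delta>"
  shows "act h 1 * a * act h 1 = act h 1 * a \<and>
         (symmetric_on_span_grouplikes smH \<Delta> smA act \<longrightarrow> act h 1 * a = a * act h 1) \<and>
         (act h 1 = 0 \<longrightarrow> (\<forall>i::int. act (int_pow h i) 1 * act (int_pow h (i + 1)) 1 = 0))"
proof -
  have Delta_h: "tens2_eq smH (\<Delta> h) [(h, h)]"
    using h unfolding grouplikes_def by simp
  have hS: "h * S h = 1" and Sh: "S h * h = 1"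
    using grouplike_antipode_inverse[OF H h] by simp_all
  have act_one: "act 1 b = b" and act_zero: "act g 0 = 0" for b g
    using pa unfolding partial_action_def bilinear_action_def
    by (simp, metis add_cancel_right_left add_0)
  have left_mult: "act h 1 * b = act h (act (S h) b)" for b
    using partial_action_grouplike_compose[OF H A pa Delta_h] hS act_one by simp
  have "act h 1 * a * act h 1 = act h 1 * a"
    using partial_action_grouplike_mult[OF H A pa Delta_h, of "act (S h) a" 1] left_mult by simp
  moreover have "act h 1 * a = a * act h 1" if "symmetric_on_span_grouplikes smH \<Delta> smA act"
    using symmetric_partial_action_grouplike_compose[OF H A that h grouplike_antipode[OF H h]]
      left_mult hS act_one by simp
  moreover have "act (int_pow h i) 1 * act (int_pow h (i + 1)) 1 = 0" if "act h 1 = 0" for i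
    using partial_action_grouplike_compose[OF H A pa grouplike_int_pow[OF H h], where k = h and b = 1]
      int_pow_add_one[OF hS Sh] that act_zero by simp
  ultimately show ?thesis
    by blast
qed

end
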